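(* Let $1<a<b$ be coprime integers and let $D,E\subseteq G$ be subdiagrams. Then \[ B(\mathbf{1}_D,\mathbf{1}_E)=\mathtt{dinv}(D,E), \] where $\mathbf{1}_D,\mathbf{1}_E\in\mathbb{R}^G$ are the indicator vectors of $D$ and $E$.
   Context: Fix coprime integers $1<a<b$. Work in the grid $\mathbb{Z}^2$, with $+x$ pointing east and $+y$ pointing north; elements of $\mathbb{Z}^2$ are called cells. Let $g:\mathbb{Z}^2\to\mathbb{Z}$, $g(x,y)=ab-ax-by$. For a cell $c=(x,y)$ and an integer $k$, write $c-ka:=(x+k,y)$ and $c-kb:=(x,y+k)$. Let $G=\{(x,y)\in\mathbb{Z}_{\ge1}^2: g(x,y)>0\}$. A subdiagram is a subset $D\subseteq G$ such that whenever $(x,y)\in D$, $(x',y')\in G$, $x'\le x$ and $y'\le y$, we have $(x',y')\in D$. Define $K(d)=\mathbf{1}_{d\ge0}-\mathbf{1}_{d\ge a}-\mathbf{1}_{d\ge b}+\mathbf{1}_{d\ge a+b}$ for $d\in\mathbb{Z}$, the quadratic form $Q(\mathbf{n})=\sum_{i,j\in G}K(g(j)-g(i))\,n_in_j$ on $\mathbb{R}^G$, and let $B$ be the unique symmetric bilinear form on $\mathbb{R}^G$ with $B(\mathbf{n},\mathbf{n})=Q(\mathbf{n})$, namely \[ B(\mathbf{n},\mathbf{n}')=\tfrac12\sum_{i,j\in G}K(g(j)-g(i))\,(n_in'_j+n'_in_j). \] For a subdiagram $D$ and $c\in D$, let $\mathrm{arm}_D(c)=\max\{k\ge0: c-ka\in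 D\}$ and $\mathrm{leg}_D(c)=\max\{k\ge 0: c-kb\in D\}$. For subdiagrams $D,E$ and $c\in D\cap E$ define the mixed cross hook slopes \[ m_D^E(c)=\frac{\mathrm{leg}_E(c)}{\mathrm{arm}_D(c)+1},\qquad M_D^E(c)=\frac{\mathrm{leg}_E(c)+1}{\mathrm{arm}_D(c)}\] (with $M_D^E(c)=+\infty$ if $\mathrm{arm}_D(c)=0$), and the cross-dinv \[ \mathtt{dinv}(D,E)=\tfrac12\Big(\#\{c\in D\cap E: m_D^E(c)<\tfrac ab<M_D^E(c)\}+\#\{c\in D\cap E: m_E^D(c)<\tfrac ab<M_E^D(c)\}\Big). \] *)

theory Defs
  imports "HOL-Analysis.Analysis"
begin

type_synonym cell = "int \<times> int"

definition gfun :: "int \<Rightarrow> int \<Rightarrow> cell \<Rightarrow> int" where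
  "gfun a b c = a * b - a * fst c - b * snd c"

definition Gset :: "int \<Rightarrow> int \<Rightarrow> cell set" where
  "Gset a b = {(x, y). x \<ge> 1 \<and> y \<ge> 1 \<and> gfun a b (x, y) > 0}"

definition subdiagram :: "int \<Rightarrow> int \<Rightarrow> cell set \<Rightarrow> bool" where
  "subdiagram a b D \<longleftrightarrow> D \<subseteq> Gset a b \<and>
     (\<forall>x y x' y'. (x, y) \<in> D \<longrightarrow> (x', y') \<in> Gset a b \<longrightarrow> x' \<le> x \<longrightarrow> y' \<le> y
        \<longrightarrow> (x', y') \<in> D)"

definition Kfun :: "int \<Rightarrow> int \<Rightarrow> int \<Rightarrow> int" where
  "Kfun a b d = (if d \<ge> 0 then 1 else 0) - (if d \<ge> a then 1 else 0)
     - (if d \<ge> b then 1 else 0) + (if d \<ge> a + b then 1 else 0)"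

definition Qform :: "int \<Rightarrow> int \<Rightarrow> (cell \<Rightarrow> real) \<Rightarrow> real" where
  "Qform a b n = (\<Sum>i\<in>Gset a b. \<Sum>j\<in>Gset a b.
      of_int (Kfun a b (gfun a b j - gfun a b i)) * n i * n j)"

definition Bform :: "int \<Rightarrow> int \<Rightarrow> (cell \<Rightarrow> real) \<Rightarrow> (cell \<Rightarrow> real) \<Rightarrow> real" where
  "Bform a b n n' = (1/2) * (\<Sum>i\<in>Gset a b. \<Sum>j\<in>Gset a b.
      of_int (Kfun a b (gfun a b j - gfun a b i)) * (n i * n' j + n' i * n j))"

text \<open>c - k a = (x + k, y);  c - k b = (x, y + k)\<close>
definition arm :: "cell set \<Rightarrow> cell \<Rightarrow> nat" where
  "arm D c = Max {k::nat. (fst c + int k, snd c) \<in> D}"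

definition leg :: "cell set \<Rightarrow> cell \<Rightarrow> nat" where
  "leg D c = Max {k::nat. (fst c, snd c + int k) \<in> D}"

text \<open>m_D^E(c) < a/b < M_D^E(c), with M = +infinity when arm_D(c) = 0.\<close>
definition slope_cond :: "int \<Rightarrow> int \<Rightarrow> cell set \<Rightarrow> cell set \<Rightarrow> cell \<Rightarrow> bool" where
  "slope_cond a b D E c \<longleftrightarrow>
     real (leg E c) / (real (arm D c) + 1) < real_of_int a / real_of_int b \<and>
     (arm D c = 0 \<or> real_of_int a / real_of_int b < (real (leg E c) + 1) / real (arm D c))"

definition dinv :: "int \<Rightarrow> int \<Rightarrow> cell set \<Rightarrow> cell set \<Rightarrow> real" where
  "dinv a b D E = (1/2) * (real (card {c \<in> D \<inter> E. slope_cond a b D E c})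
                          + real (card {c \<in> D \<inter> E. slope_cond a b E D c}))"

end

theory Submission
  imports Defs
begin

text \<open>
  Put K'(d) = K(d) + K(-d). As B is symmetric, B(1_D, 1_E) is half the sum of
  K'(g(w) - g(z)) over z \<in> D and w \<in> E.

  At a cell c with r = arm_D(c) and l = leg_E(c) the condition m < a/b < M reads
  -a < a r - b l < b. Write its indicator \<chi>(r, l) as the sum over the rectangle
  [0, r] \<times> [0, l] of the mixed second differences \<psi> of \<chi>. A point (r', l') of
  the rectangle gives the pair z = c - r'a \<in> D, w = c - l'b \<in> E, and every pair
  (z, w) \<in> D \<times> E with w weakly north-west of z arises from exactly one c, the corner
  (x_w, y_z), which lies in D \<inter> E because both diagrams are down-closed. So each of
  the two counts in dinv is a sum of \<psi> over north-west pairs, and a case analysis shows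
  \<psi>(u, v) + \<psi>(-u, -v) = K'(a u - b v), with \<psi> read as 0 off the closed positive
  quadrant.
\<close>

lemma sum_int_telescope:
  fixes h :: "int \<Rightarrow> 'a::ab_group_add"
  assumes "0 \<le> n"
  shows "(\<Sum>k\<in>{0..n}. h k - h (k - 1)) = h n - h (- 1)"
  using assms
proof (induction n rule: int_ge_induct)
  case base
  then show ?case by simp
next
  case (step n)
  then have "{0..n + 1} = insert (n + 1) {0..n}" by auto
  then show ?case using step by simp
qed

lemma sum_mixed_differences:
  fixes f :: "int \<Rightarrow> int \<Rightarrow> 'a::ab_group_add"
  assumes "0 \<le> r" "0 \<le> l" "\<And>y. f (- 1) y = 0" "\<And>x. f x (- 1) = 0"
  shows "(\<Sum>x\<in>{0..r}. \<Sum>y\<in>{0..l}. f x y - f (x - 1) y - f x (y - 1) + f (x - 1) (y - 1)) = f r l"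
proof -
  have "(\<Sum>y\<in>{0..l}. f x y - f (x - 1) y - f x (y - 1) + f (x - 1) (y - 1)) = f x l - f (x - 1) l"
    for x
    using sum_int_telescope[OF assms(2), of "\<lambda>y. f x y - f (x - 1) y"] assms(4)
    by (simp add: algebra_simps)
  then show ?thesis
    using sum_int_telescope[OF assms(1), of "\<lambda>x. f x l"] assms(3) by simp
qed

lemma down_closed_mem_iff_le_Max:
  fixes S :: "nat set"
  assumes "finite S" "0 \<in> S" "\<And>i j. j \<in> S \<Longrightarrow> i \<le> j \<Longrightarrow> i \<in> S"
  shows "k \<in> S \<longleftrightarrow> k \<le> Max S"
  using assms Max_ge Max_in by blast

lemma sum_sum_mult_indicator:
  fixes f :: "'a \<Rightarrow> 'b \<Rightarrow> 'c::comm_ring_1"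
  assumes "finite A" "finite B" "X \<subseteq> A" "Y \<subseteq> B"
  shows "(\<Sum>i\<in>A. \<Sum>j\<in>B. f i j * (indicator X i * indicator Y j)) = (\<Sum>i\<in>X. \<Sum>j\<in>Y. f i j)"
proof -
  have "(\<Sum>i\<in>A. \<Sum>j\<in>B. f i j * (indicator X i * indicator Y j))
      = (\<Sum>i\<in>A. if i \<in> X then \<Sum>j\<in>B. if j \<in> Y then f i j else 0 else 0)"
    by (auto simp: indicator_def intro!: sum.cong)
  also have "\<dots> = (\<Sum>i\<in>X. \<Sum>j\<in>Y. f i j)"
    using assms by (simp add: Int_absorb1 Int_absorb2 flip: sum.inter_restrict)
  finally show ?thesis .
qed

lemma Gset_bounds:
  assumes "0 < a" "0 < b" "(x, y) \<in> Gset a b"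
  shows "1 \<le> x" "x < b" "1 \<le> y" "y < a"
proof -
  have x: "1 \<le> x" and y: "1 \<le> y" and g: "a * x + b * y < a * b"
    using assms(3) by (auto simp: Gset_def gfun_def)
  have "a \<le> a * x" "b \<le> b * y"
    using assms x y mult_left_mono[of 1 x a] mult_left_mono[of 1 y b] by simp_all
  then have "a * x < a * b" "b * y < b * a"
    using g assms mult.commute[of b a] by linarith+
  then show "1 \<le> x" "x < b" "1 \<le> y" "y < a"
    using assms x y by simp_all
qed

lemma finite_Gset:
  assumes "0 < a" "0 < b"
  shows "finite (Gset a b)"
proof (rule finite_subset)
  show "Gset a b \<subseteq> {1..b} \<times> {1..a}"
    using Gset_bounds[OF assms] by fastforce
qed simp

lemma subdiagram_finite:
  assumes "subdiagram a b D" "0 < a" "0 < b"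
  shows "finite D"
  using assms finite_subset finite_Gset unfolding subdiagram_def by blast

lemma subdiagram_ge_1:
  assumes "subdiagram a b D" "(x, y) \<in> D"
  shows "1 \<le> x" "1 \<le> y"
  using assms by (auto simp: subdiagram_def Gset_def)

lemma subdiagram_down_closed:
  assumes "subdiagram a b D" "0 < a" "0 < b" "(x, y) \<in> D" "1 \<le> x'" "1 \<le> y'" "x' \<le> x" "y' \<le> y"
  shows "(x', y') \<in> D"
proof -
  have "(x, y) \<in> Gset a b" using assms(1,4) by (auto simp: subdiagram_def)
  moreover have "a * x' \<le> a * x" "b * y' \<le> b * y" using assms by (intro mult_left_mono; simp)+
  ultimately have "(x', y') \<in> Gset a b" using assms(5,6) by (auto simp: Gset_def gfun_def)
  then show ?thesis using assms(1,4,7,8) unfolding subdiagram_def by blast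
qed

lemma subdiagram_row_iff_le_arm:
  assumes D: "subdiagram a b D" and "0 < a" "0 < b" "(x, y) \<in> D" "0 \<le> k"
  shows "(x + k, y) \<in> D \<longleftrightarrow> k \<le> int (arm D (x, y))"
proof -
  let ?S = "{j::nat. (x + int j, y) \<in> D}"
  have "finite ?S"
    using finite_vimageI[OF subdiagram_finite[OF assms(1-3)], of "\<lambda>j::nat. (x + int j, y)"]
    by (simp add: inj_def vimage_def)
  moreover have "i \<in> ?S" if "j \<in> ?S" "i \<le> j" for i j
    using that subdiagram_down_closed[OF assms(1-3)] subdiagram_ge_1[OF D assms(4)] by simp
  ultimately have "nat k \<in> ?S \<longleftrightarrow> nat k \<le> arm D (x, y)"
    unfolding arm_def fst_conv snd_conv using assms(4) by (intro down_closed_mem_iff_le_Max) auto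
  then show ?thesis using assms(5) by (simp add: nat_le_iff)
qed

lemma subdiagram_column_iff_le_leg:
  assumes D: "subdiagram a b D" and "0 < a" "0 < b" "(x, y) \<in> D" "0 \<le> k"
  shows "(x, y + k) \<in> D \<longleftrightarrow> k \<le> int (leg D (x, y))"
proof -
  let ?S = "{j::nat. (x, y + int j) \<in> D}"
  have "finite ?S"
    using finite_vimageI[OF subdiagram_finite[OF assms(1-3)], of "\<lambda>j::nat. (x, y + int j)"]
    by (simp add: inj_def vimage_def)
  moreover have "i \<in> ?S" if "j \<in> ?S" "i \<le> j" for i j
    using that subdiagram_down_closed[OF assms(1-3)] subdiagram_ge_1[OF D assms(4)] by simp
  ultimately have "nat k \<in> ?S \<longleftrightarrow> nat k \<le> leg D (x, y)"
    unfolding leg_def fst_conv snd_conv using assms(4) by (intro down_closed_mem_iff_le_Max) auto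
  then show ?thesis using assms(5) by (simp add: nat_le_iff)
qed

lemma sum_hook_rectangles_eq_sum_northwest_pairs:
  fixes h :: "int \<Rightarrow> int \<Rightarrow> 'a::comm_monoid_add"
  assumes D: "subdiagram a b D" and E: "subdiagram a b E" and ab: "0 < a" "0 < b"
  shows "(\<Sum>c\<in>D \<inter> E. \<Sum>r\<in>{0..int (arm D c)}. \<Sum>l\<in>{0..int (leg E c)}. h r l)
       = (\<Sum>z\<in>D. \<Sum>w\<in>E. if fst w \<le> fst z \<and> snd z \<le> snd w
            then h (fst z - fst w) (snd w - snd z) else 0)"
proof -
  define Hooks where "Hooks = Sigma (D \<inter> E) (\<lambda>c. {0..int (arm D c)} \<times> {0..int (leg E c)})"
  define Pairs where "Pairs = {(z, w) \<in> D \<times> E. fst w \<le> fst z \<and> snd z \<le> snd w}"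
  define ends :: "cell \<times> int \<times> int \<Rightarrow> cell \<times> cell" where
    "ends = (\<lambda>((x, y), r, l). ((x + r, y), (x, y + l)))"
  have finD: "finite D" and finE: "finite E"
    using subdiagram_finite D E ab by blast+
  have "bij_betw ends Hooks Pairs"
  proof (rule bij_betwI')
    show "ends p \<in> Pairs" if "p \<in> Hooks" for p
      using that subdiagram_row_iff_le_arm[OF D ab] subdiagram_column_iff_le_leg[OF E ab]
      by (auto simp: Hooks_def Pairs_def ends_def)
    show "\<exists>p\<in>Hooks. q = ends p" if q: "q \<in> Pairs" for q
    proof -
      obtain xz yz xw yw where q_eq: "q = ((xz, yz), (xw, yw))"
        and z: "(xz, yz) \<in> D" and w: "(xw, yw) \<in> E" and nw: "xw \<le> xz" "yz \<le> yw"
        using q unfolding Pairs_def by (cases q) auto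
      have "(xw, yz) \<in> D"
        using subdiagram_down_closed[OF D ab z] subdiagram_ge_1[OF D z] subdiagram_ge_1[OF E w] nw
        by simp
      moreover have "(xw, yz) \<in> E"
        using subdiagram_down_closed[OF E ab w] subdiagram_ge_1[OF D z] subdiagram_ge_1[OF E w] nw
        by simp
      ultimately have "((xw, yz), xz - xw, yw - yz) \<in> Hooks"
        using subdiagram_row_iff_le_arm[OF D ab, of xw yz "xz - xw"]
          subdiagram_column_iff_le_leg[OF E ab, of xw yz "yw - yz"] z w nw
        by (auto simp: Hooks_def)
      then show ?thesis by (force simp: q_eq ends_def)
    qed
  qed (auto simp: Hooks_def ends_def)
  then have "(\<Sum>p\<in>Hooks. (\<lambda>(z, w). h (fst z - fst w) (snd w - snd z)) (ends p))
      = (\<Sum>(z, w)\<in>Pairs. h (fst z - fst w) (snd w - snd z))"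
    by (rule sum.reindex_bij_betw)
  moreover have "(\<Sum>p\<in>Hooks. (\<lambda>(z, w). h (fst z - fst w) (snd w - snd z)) (ends p))
      = (\<Sum>c\<in>D \<inter> E. \<Sum>r\<in>{0..int (arm D c)}. \<Sum>l\<in>{0..int (leg E c)}. h r l)"
    using finD by (simp add: Hooks_def ends_def sum.Sigma sum.cartesian_product split_def)
  moreover have "(\<Sum>(z, w)\<in>Pairs. h (fst z - fst w) (snd w - snd z))
      = (\<Sum>z\<in>D. \<Sum>w\<in>E. if fst w \<le> fst z \<and> snd z \<le> snd w
            then h (fst z - fst w) (snd w - snd z) else 0)"
  proof -
    have "Pairs = {p \<in> D \<times> E. case p of (z, w) \<Rightarrow> fst w \<le> fst z \<and> snd z \<le> snd w}"
      by (auto simp: Pairs_def)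
    then show ?thesis
      using finD finE by (simp add: sum.inter_filter sum.cartesian_product split_def)
  qed
  ultimately show ?thesis by simp
qed

definition Kfun_sym :: "int \<Rightarrow> int \<Rightarrow> int \<Rightarrow> real" where
  "Kfun_sym a b d = of_int (Kfun a b d + Kfun a b (- d))"

definition slope_indicator :: "int \<Rightarrow> int \<Rightarrow> int \<Rightarrow> int \<Rightarrow> real" where
  "slope_indicator a b r l =
     (if 0 \<le> r \<and> 0 \<le> l \<and> b * l < a * r + a \<and> a * r < b * l + b then 1 else 0)"

definition slope_delta :: "int \<Rightarrow> int \<Rightarrow> int \<Rightarrow> int \<Rightarrow> real" where
  "slope_delta a b r l = slope_indicator a b r l - slope_indicator a b (r - 1) l
     - slope_indicator a b r (l - 1) + slope_indicator a b (r - 1) (l - 1)"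

lemma slope_cond_iff:
  assumes "0 < a" "0 < b"
  shows "slope_cond a b D E c \<longleftrightarrow>
    b * int (leg E c) < a * int (arm D c) + a \<and> a * int (arm D c) < b * int (leg E c) + b"
proof -
  define r where "r = arm D c"
  define l where "l = leg E c"
  have "real l / (real r + 1) < a / b \<longleftrightarrow> real_of_int (b * l) < real_of_int (a * r + a)"
    using assms by (simp add: field_simps)
  moreover have "a / b < (real l + 1) / real r \<longleftrightarrow> real_of_int (a * r) < real_of_int (b * l + b)"
    if "r > 0"
    using assms that by (simp add: field_simps)
  moreover have "0 < b * int l + b"
    using assms by (simp add: add_nonneg_pos)
  ultimately show ?thesis
    unfolding slope_cond_def r_def[symmetric] l_def[symmetric] of_int_less_iff
    by (cases "r = 0") auto
qed

lemma slope_indicator_eq_sum_slope_delta: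
  assumes "0 \<le> r" "0 \<le> l"
  shows "slope_indicator a b r l = (\<Sum>x\<in>{0..r}. \<Sum>y\<in>{0..l}. slope_delta a b x y)"
  unfolding slope_delta_def
  by (rule sum_mixed_differences[OF assms, symmetric]) (simp_all add: slope_indicator_def)

lemma slope_delta_eq_Kfun_sym:
  fixes a b u v :: int
  assumes "0 < a" "a < b" "0 \<le> u" "0 \<le> v" "u \<noteq> 0 \<or> v \<noteq> 0"
  shows "slope_delta a b u v = Kfun_sym a b (a * u - b * v)"
proof -
  obtain P Q where P: "a * u = P" and Q: "b * v = Q" by blast
  have shift: "a * (u - 1) = P - a" "b * (v - 1) = Q - b" "- (a * u - b * v) = Q - P"
    using P Q by (simp_all add: algebra_simps)
  have "a \<le> P" if "1 \<le> u" using that assms mult_left_mono[of 1 u a] P by simp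
  moreover have "b \<le> Q" if "1 \<le> v" using that assms mult_left_mono[of 1 v b] Q by simp
  ultimately consider "u = 0" "P = 0" "1 \<le> v" "b \<le> Q" | "1 \<le> u" "a \<le> P" "v = 0" "Q = 0"
    | "1 \<le> u" "a \<le> P" "1 \<le> v" "b \<le> Q"
    using assms P Q by (cases "u = 0"; cases "v = 0") auto
  then show ?thesis
    unfolding slope_delta_def slope_indicator_def Kfun_sym_def Kfun_def shift P Q
    by cases (use assms in auto)
qed

lemma slope_delta_opposite_pair:
  fixes a b u v :: int
  assumes "0 < a" "a < b"
  shows "(if 0 \<le> u \<and> 0 \<le> v then slope_delta a b u v else 0)
       + (if u \<le> 0 \<and> v \<le> 0 then slope_delta a b (- u) (- v) else 0) = Kfun_sym a b (a * u - b * v)"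
proof -
  have Kfun_sym_uminus: "Kfun_sym a b (- d) = Kfun_sym a b d" for d by (simp add: Kfun_sym_def)
  consider "u = 0" "v = 0" | "0 \<le> u" "0 \<le> v" "u \<noteq> 0 \<or> v \<noteq> 0"
    | "u \<le> 0" "v \<le> 0" "u \<noteq> 0 \<or> v \<noteq> 0" | "0 < u" "v < 0" | "u < 0" "0 < v"
    by linarith
  then show ?thesis
  proof cases
    case 1
    then show ?thesis
      using assms by (simp add: slope_delta_def slope_indicator_def Kfun_sym_def Kfun_def)
  next
    case 2
    then show ?thesis using assms slope_delta_eq_Kfun_sym[of a b u v] by auto
  next
    case 3
    then show ?thesis
      using assms slope_delta_eq_Kfun_sym[of a b "- u" "- v"] Kfun_sym_uminus[of "a * u - b * v"]
      by auto
  next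
    case 4
    then have "a * 1 \<le> a * u" "b * 1 \<le> b * (- v)" using assms by (intro mult_left_mono; simp)+
    then have "a + b \<le> a * u - b * v" by simp
    with 4 assms show ?thesis by (simp add: Kfun_sym_def Kfun_def)
  next
    case 5
    then have "a * 1 \<le> a * (- u)" "b * 1 \<le> b * v" using assms by (intro mult_left_mono; simp)+
    then have "a * u - b * v \<le> - (a + b)" by simp
    with 5 assms show ?thesis by (simp add: Kfun_sym_def Kfun_def)
  qed
qed

definition northwest_weight :: "int \<Rightarrow> int \<Rightarrow> cell \<Rightarrow> cell \<Rightarrow> real" where
  "northwest_weight a b z w = (if fst w \<le> fst z \<and> snd z \<le> snd w
     then slope_delta a b (fst z - fst w) (snd w - snd z) else 0)"

lemma northwest_weight_add_commute:
  assumes "0 < a" "a < b"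
  shows "northwest_weight a b z w + northwest_weight a b w z = Kfun_sym a b (gfun a b w - gfun a b z)"
proof -
  let ?u = "fst z - fst w" and ?v = "snd w - snd z"
  have "northwest_weight a b z w + northwest_weight a b w z
      = (if 0 \<le> ?u \<and> 0 \<le> ?v then slope_delta a b ?u ?v else 0)
      + (if ?u \<le> 0 \<and> ?v \<le> 0 then slope_delta a b (- ?u) (- ?v) else 0)"
    by (simp add: northwest_weight_def)
  also have "\<dots> = Kfun_sym a b (a * ?u - b * ?v)"
    by (rule slope_delta_opposite_pair[OF assms])
  also have "a * ?u - b * ?v = gfun a b w - gfun a b z"
    by (simp add: gfun_def algebra_simps)
  finally show ?thesis .
qed

lemma card_slope_cond_eq_sum_northwest_weight:
  assumes D: "subdiagram a b D" and E: "subdiagram a b E" and ab: "0 < a" "0 < b"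
  shows "real (card {c \<in> D \<inter> E. slope_cond a b D E c})
       = (\<Sum>z\<in>D. \<Sum>w\<in>E. northwest_weight a b z w)"
proof -
  have "finite (D \<inter> E)" using subdiagram_finite[OF D ab] by simp
  then have "real (card {c \<in> D \<inter> E. slope_cond a b D E c})
      = (\<Sum>c\<in>D \<inter> E. if slope_cond a b D E c then 1 else 0)"
    by (simp only: real_of_card sum.inter_filter)
  also have "\<dots> = (\<Sum>c\<in>D \<inter> E. slope_indicator a b (int (arm D c)) (int (leg E c)))"
    by (simp add: slope_cond_iff[OF ab] slope_indicator_def)
  also have "\<dots> = (\<Sum>c\<in>D \<inter> E. \<Sum>r\<in>{0..int (arm D c)}. \<Sum>l\<in>{0..int (leg E c)}.
                      slope_delta a b r l)"
    by (simp add: slope_indicator_eq_sum_slope_delta)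
  also have "\<dots> = (\<Sum>z\<in>D. \<Sum>w\<in>E. northwest_weight a b z w)"
    unfolding northwest_weight_def by (rule sum_hook_rectangles_eq_sum_northwest_pairs[OF D E ab])
  finally show ?thesis .
qed

lemma Bform_indicator:
  assumes D: "subdiagram a b D" and E: "subdiagram a b E" and ab: "0 < a" "0 < b"
  shows "Bform a b (indicator D) (indicator E)
       = 1/2 * (\<Sum>z\<in>D. \<Sum>w\<in>E. Kfun_sym a b (gfun a b w - gfun a b z))"
proof -
  let ?K = "\<lambda>i j. real_of_int (Kfun a b (gfun a b j - gfun a b i))"
  have G: "finite (Gset a b)" "D \<subseteq> Gset a b" "E \<subseteq> Gset a b"
    using finite_Gset[OF ab] D E by (auto simp: subdiagram_def)
  have "Bform a b (indicator D) (indicator E)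
      = 1/2 * ((\<Sum>i\<in>Gset a b. \<Sum>j\<in>Gset a b. ?K i j * (indicator D i * indicator E j))
             + (\<Sum>i\<in>Gset a b. \<Sum>j\<in>Gset a b. ?K i j * (indicator E i * indicator D j)))"
    unfolding Bform_def by (simp add: sum.distrib[symmetric] algebra_simps)
  also have "\<dots> = 1/2 * ((\<Sum>z\<in>D. \<Sum>w\<in>E. ?K z w) + (\<Sum>w\<in>E. \<Sum>z\<in>D. ?K w z))"
    using G by (simp add: sum_sum_mult_indicator)
  also have "\<dots> = 1/2 * (\<Sum>z\<in>D. \<Sum>w\<in>E. Kfun_sym a b (gfun a b w - gfun a b z))"
    by (simp add: sum.swap[of _ E] sum.distrib[symmetric] Kfun_sym_def)
  finally show ?thesis .
qed

theorem theorem1p2: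
  fixes a b :: int and D E :: "cell set"
  assumes "1 < a" and "a < b" and "coprime a b"
    and "subdiagram a b D" and "subdiagram a b E"
  shows "Bform a b (indicator D) (indicator E) = dinv a b D E"
proof -
  have a: "0 < a" and b: "0 < b" using assms(1,2) by simp_all
  note D = assms(4) and E = assms(5)
  have "{c \<in> D \<inter> E. slope_cond a b E D c} = {c \<in> E \<inter> D. slope_cond a b E D c}"
    by blast
  then have "dinv a b D E
      = 1/2 * ((\<Sum>z\<in>D. \<Sum>w\<in>E. northwest_weight a b z w)
             + (\<Sum>w\<in>E. \<Sum>z\<in>D. northwest_weight a b w z))"
    unfolding dinv_def by (simp only: card_slope_cond_eq_sum_northwest_weight D E a b)
  also have "\<dots> = 1/2 * (\<Sum>z\<in>D. \<Sum>w\<in>E. Kfun_sym a b (gfun a b w - gfun a b z))"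
    by (simp add: sum.swap[of _ E] sum.distrib[symmetric] northwest_weight_add_commute[OF a assms(2)])
  also have "\<dots> = Bform a b (indicator D) (indicator E)"
    by (rule Bform_indicator[OF D E a b, symmetric])
  finally show ?thesis ..
qed

end
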